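(* In the setting below, suppose $k_0$ satisfies $\operatorname{Im}\lambda(k_0)>0$ and the Jost solutions at $k_0$ are linearly dependent, $\phi(x,k_0)=b_0\,\psi(x,k_0)$ for all $x\in\mathbb{R}$ with a constant $b_0$ (as happens at a zero of $a$). Then $b_0^2=-1$, i.e. $b_0=\pm i$.
   Context: Setting: $q:\mathbb{R}\to\mathbb{C}$ with $q(x)\to q_\pm=q_0e^{i\theta_\pm}$ as $x\to\pm\infty$, $q_0>0$, $\theta_++\theta_-\equiv0\pmod{2\pi}$, $q-q_\pm$ integrable at $\pm\infty$. Scattering problem (nonlocal Sinh-Gordon/RST-NLS, $\sigma=1$): $v_x=\begin{pmatrix}-ik&q(x)\\ q(-x)&ik\end{pmatrix}v$, $\lambda=\sqrt{k^2-q_0^2}$. Jost solutions: $\phi$ is the solution with $\phi(x,k)\sim(\lambda+k,iq_+)^Te^{-i\lambda x}$ as $x\to-\infty$, and $\psi$ the solution with $\psi(x,k)\sim(-iq_+,\lambda+k)^Te^{i\lambda x}$ as $x\to+\infty$ (both exist and are nonzero for $\operatorname{Im}\lambda>0$). *)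

theory Defs
  imports "HOL-Analysis.Analysis"
begin

definition scat_rhs :: "(real \<Rightarrow> complex) \<Rightarrow> complex \<Rightarrow> real \<Rightarrow> complex \<times> complex \<Rightarrow> complex \<times> complex" where
  "scat_rhs q k x v = (- \<i> * k * fst v + q x * snd v, q (- x) * fst v + \<i> * k * snd v)"

definition is_scat_solution :: "(real \<Rightarrow> complex) \<Rightarrow> complex \<Rightarrow> (real \<Rightarrow> complex \<times> complex) \<Rightarrow> bool" where
  "is_scat_solution q k v \<longleftrightarrow>
     (\<forall>a b. a \<le> b \<longrightarrow> ((\<lambda>t. scat_rhs q k t (v t)) has_integral (v b - v a)) {a..b})"

definition jost_phi :: "(real \<Rightarrow> complex) \<Rightarrow> complex \<Rightarrow> complex \<Rightarrow> complex \<Rightarrow> (real \<Rightarrow> complex \<times> complex) \<Rightarrow> bool" where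
  "jost_phi q qp k lam phi \<longleftrightarrow> is_scat_solution q k phi \<and>
     ((\<lambda>x. exp (\<i> * lam * of_real x) * fst (phi x)) \<longlongrightarrow> lam + k) at_bot \<and>
     ((\<lambda>x. exp (\<i> * lam * of_real x) * snd (phi x)) \<longlongrightarrow> \<i> * qp) at_bot"

definition jost_psi :: "(real \<Rightarrow> complex) \<Rightarrow> complex \<Rightarrow> complex \<Rightarrow> complex \<Rightarrow> (real \<Rightarrow> complex \<times> complex) \<Rightarrow> bool" where
  "jost_psi q qp k lam psi \<longleftrightarrow> is_scat_solution q k psi \<and>
     ((\<lambda>x. exp (- \<i> * lam * of_real x) * fst (psi x)) \<longlongrightarrow> - \<i> * qp) at_top \<and>
     ((\<lambda>x. exp (- \<i> * lam * of_real x) * snd (psi x)) \<longlongrightarrow> lam + k) at_top"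

end

theory Submission
  imports Defs
begin

(*
  Reflecting x to -x exchanges q(x) and q(-x), so v(x) |-> (v2(-x), -v1(-x)) maps solutions of
  the nonlocal problem to solutions. Applied to psi it gives a solution R with the same
  asymptotics as phi at -infinity. Both decay like exp(-i lambda x) there, so their Wronskian,
  being constant, vanishes; uniqueness for the integral equation makes R a multiple of phi, and
  the asymptotics force the multiple to be 1. With phi = b0 psi, the identity R = phi reads
  psi2(-x) = b0 psi1(x) and -psi1(-x) = b0 psi2(x); using both at x and -x gives
  -psi1 = b0^2 psi1, while psi1 does not vanish identically.
*)

lemma continuous_on_if_integral_increments:
  fixes v f :: "real \<Rightarrow> 'a::banach"
  assumes "\<And>a b. a \<le> b \<Longrightarrow> (f has_integral (v b - v a)) {a..b}"
  shows "continuous_on UNIV v"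
proof (rule continuous_at_imp_continuous_on, intro ballI)
  fix x :: real
  let ?a = "x - 1" and ?b = "x + 1"
  have "f integrable_on {?a..?b}" using assms[of ?a ?b] by auto
  then have "continuous_on {?a..?b} (\<lambda>t. v ?a + integral {?a..t} f)"
    by (intro continuous_intros indefinite_integral_continuous_1)
  then have "continuous_on {?a..?b} v"
  proof (rule continuous_on_eq)
    show "v ?a + integral {?a..t} f = v t" if "t \<in> {?a..?b}" for t
      using assms[of ?a t] that by (simp add: integral_unique)
  qed
  moreover have "x \<in> interior {?a..?b}"
    by simp
  ultimately show "isCont v x"
    using continuous_on_interior by blast
qed

lemma integral_equation_zero_right:
  fixes v F :: "real \<Rightarrow> 'a::banach" and m :: "real \<Rightarrow> real"
  assumes incr: "\<And>a b. a \<le> b \<Longrightarrow> (F has_integral (v b - v a)) {a..b}"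
    and bound: "\<And>t. norm (F t) \<le> m t * norm (v t)"
    and m_nonneg: "\<And>t. 0 \<le> m t"
    and m_int: "\<And>a b. m integrable_on {a..b}"
    and zero: "v x0 = 0"
  shows "\<exists>d>0. \<forall>t\<in>{x0..x0+d}. v t = 0"
proof -
  have "continuous_on {x0..x0+1} (\<lambda>t. integral {x0..t} m)"
    by (rule indefinite_integral_continuous_1[OF m_int])
  from this[unfolded continuous_on_iff, rule_format, of x0 "1/2"]
  obtain d0 where d0: "d0 > 0"
    and small0: "\<forall>t\<in>{x0..x0+1}. dist t x0 < d0 \<longrightarrow> dist (integral {x0..t} m) 0 < 1/2"
    by auto
  define d where "d = min (d0/2) 1"
  have d: "d > 0" using d0 by (simp add: d_def)
  have small: "integral {x0..t} m \<le> 1/2" if "t \<in> {x0..x0+d}" for t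
  proof -
    have "t \<in> {x0..x0+1}" "dist t x0 < d0"
      using that d0 by (auto simp: d_def dist_real_def)
    then show ?thesis
      using small0 by fastforce
  qed
  have "continuous_on {x0..x0+d} (\<lambda>t. norm (v t))"
    using continuous_on_if_integral_increments[OF incr]
    by (intro continuous_intros) (auto intro: continuous_on_subset)
  moreover have "{x0..x0+d} \<noteq> {}"
    using d by simp
  ultimately obtain ts where ts: "ts \<in> {x0..x0+d}"
    and ts_max: "\<And>t. t \<in> {x0..x0+d} \<Longrightarrow> norm (v t) \<le> norm (v ts)"
    using continuous_attains_sup[OF compact_Icc] by blast
  define M where "M = norm (v ts)"
  have "M = norm (integral {x0..ts} F)"
    using integral_unique[OF incr] ts zero by (simp add: M_def)
  also have "\<dots> \<le> integral {x0..ts} (\<lambda>t. M * m t)"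
  proof (rule integral_norm_bound_integral)
    show "F integrable_on {x0..ts}" using incr ts by auto
    show "(\<lambda>t. M * m t) integrable_on {x0..ts}" by (intro integrable_on_mult_right m_int)
    fix t assume "t \<in> {x0..ts}"
    then have "norm (v t) \<le> M" using ts ts_max by (auto simp: M_def)
    then show "norm (F t) \<le> M * m t"
      using bound[of t] m_nonneg[of t] by (metis mult.commute mult_left_mono order_trans)
  qed
  also have "\<dots> = M * integral {x0..ts} m"
    by simp
  also have "\<dots> \<le> M * (1/2)"
    using small[OF ts] by (intro mult_left_mono) (auto simp: M_def)
  finally have "M = 0" by (simp add: M_def)
  then show ?thesis
    using d ts_max by (intro exI[of _ d]) (auto simp: M_def)
qed

lemma integral_equation_zero:
  fixes v F :: "real \<Rightarrow> 'a::banach" and m :: "real \<Rightarrow> real"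
  assumes incr: "\<And>a b. a \<le> b \<Longrightarrow> (F has_integral (v b - v a)) {a..b}"
    and bound: "\<And>t. norm (F t) \<le> m t * norm (v t)"
    and m_nonneg: "\<And>t. 0 \<le> m t"
    and m_int: "\<And>a b. m integrable_on {a..b}"
    and zero: "v x0 = 0"
  shows "v x = 0"
proof -
  note zero_right = integral_equation_zero_right[OF incr bound m_nonneg m_int]
  have incr_refl: "((\<lambda>t. - F (- t)) has_integral (v (- b) - v (- a))) {a..b}" if "a \<le> b" for a b
    using has_integral_neg[OF has_integral_reflect_real[THEN iffD2, OF incr[of "- b" "- a"]]] that
    by simp
  have m_int_refl: "(\<lambda>t. m (- t)) integrable_on {a..b}" for a b
    using Henstock_Kurzweil_Integration.integrable_reflect_real[of m "- a" "- b"] m_int by simp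
  have bound_refl: "norm (- F (- t)) \<le> m (- t) * norm (v (- t))" for t
    using bound[of "- t"] by simp
  note zero_left = integral_equation_zero_right[OF incr_refl bound_refl _ m_int_refl]
  define Z where "Z = {x. v x = 0}"
  have "closed Z"
    unfolding Z_def using continuous_on_if_integral_increments[OF incr]
    by (intro closed_Collect_eq continuous_intros) auto
  moreover have "open Z"
  proof (rule openI)
    fix x assume "x \<in> Z"
    then obtain d1 d2 where d1: "d1 > 0" "\<forall>t\<in>{x..x+d1}. v t = 0"
      and d2: "d2 > 0" "\<forall>t\<in>{-x..-x+d2}. v (- t) = 0"
      using zero_right[of x] zero_left[of "- x"] m_nonneg by (auto simp: Z_def)
    have "y \<in> Z" if "dist y x < min d1 d2" for y
    proof (cases "x \<le> y")
      case True
      then show ?thesis using d1(2) that by (auto simp: Z_def dist_real_def)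
    next
      case False
      then show ?thesis using d2(2)[rule_format, of "- y"] that by (auto simp: Z_def dist_real_def)
    qed
    then show "\<exists>e>0. ball x e \<subseteq> Z"
      using d1 d2 by (intro exI[of _ "min d1 d2"]) (auto simp: dist_commute)
  qed
  moreover have "x0 \<in> Z"
    using zero by (simp add: Z_def)
  ultimately have "Z = UNIV"
    using clopen[of Z] by blast
  then have "x \<in> Z"
    by simp
  then show ?thesis
    by (simp add: Z_def)
qed

lemma absolutely_integrable_continuous_mult:
  fixes f u :: "real \<Rightarrow> complex"
  assumes "f absolutely_integrable_on {a..b}" "continuous_on {a..b} u"
  shows "(\<lambda>t. u t * f t) absolutely_integrable_on {a..b}"
proof (rule absolutely_integrable_bounded_measurable_product[where h="(*)"])
  show "u \<in> borel_measurable (lebesgue_on {a..b})"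
    by (simp add: assms(2) continuous_imp_measurable_on_sets_lebesgue)
  show "bounded (u ` {a..b})"
    by (simp add: assms(2) compact_continuous_image compact_imp_bounded)
qed (use assms bilinear_times in auto)

lemma eq_if_increments_dominated:
  fixes P :: "real \<Rightarrow> 'a::real_normed_vector" and G :: "real \<Rightarrow> real"
  assumes ab: "a \<le> b"
    and dominated: "\<And>e. e > 0 \<Longrightarrow> \<exists>d>0. \<forall>s t. a \<le> s \<longrightarrow> s \<le> t \<longrightarrow> t \<le> b \<longrightarrow> t - s < d \<longrightarrow>
        norm (P t - P s) \<le> e * (G t - G s)"
  shows "P b = P a"
proof -
  have bound: "norm (P b - P a) \<le> e * (G b - G a)" if e: "e > 0" for e
  proof -
    obtain d where d: "d > 0" and dom: "\<And>s t. a \<le> s \<Longrightarrow> s \<le> t \<Longrightarrow> t \<le> b \<Longrightarrow> t - s < d \<Longrightarrow>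
        norm (P t - P s) \<le> e * (G t - G s)"
      using dominated[OF e] by blast
    obtain N :: nat where N: "(b - a) / d < real N"
      using reals_Archimedean2 by blast
    moreover have "0 \<le> (b - a) / d"
      using ab d by simp
    ultimately have N_pos: "N > 0"
      by (cases N) auto
    define x where "x i = a + real i * (b - a) / real N" for i
    have x_diff: "x (Suc i) - x i = (b - a) / real N" for i
      using N_pos by (simp add: x_def field_simps)
    have x_step: "x (Suc i) - x i < d" for i
      unfolding x_diff using N d N_pos by (simp add: pos_divide_less_eq mult.commute)
    have x_between: "a \<le> x i" "x i \<le> x (Suc i)" "x (Suc i) \<le> b" if "i < N" for i
    proof -
      show "a \<le> x i"
        using ab by (simp add: x_def)
      show "x i \<le> x (Suc i)"
        using x_diff[of i] divide_nonneg_nonneg[of "b - a" "real N"] ab by linarith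
      have "real (Suc i) * (b - a) \<le> real N * (b - a)"
        using that ab by (intro mult_right_mono) auto
      then show "x (Suc i) \<le> b"
        using N_pos by (simp add: x_def field_simps)
    qed
    have "norm (P b - P a) = norm (\<Sum>i<N. P (x (Suc i)) - P (x i))"
      using sum_lessThan_telescope[of "\<lambda>i. P (x i)" N] N_pos by (simp add: x_def)
    also have "\<dots> \<le> (\<Sum>i<N. e * (G (x (Suc i)) - G (x i)))"
      by (rule order_trans[OF norm_sum sum_mono]) (simp add: dom x_between x_step)
    also have "\<dots> = e * (G b - G a)"
      using sum_lessThan_telescope[of "\<lambda>i. G (x i)" N] N_pos
      by (simp add: sum_distrib_left[symmetric] x_def)
    finally show ?thesis .
  qed
  have "\<forall>\<^sub>F e in at_right 0. norm (P b - P a) \<le> e * (G b - G a)"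
    by (rule eventually_mono[OF eventually_at_right_less bound]) simp
  moreover have "((\<lambda>e. e * (G b - G a)) \<longlongrightarrow> 0 * (G b - G a)) (at_right 0)"
    by (intro tendsto_intros)
  ultimately have "norm (P b - P a) \<le> 0 * (G b - G a)"
    by (rule tendsto_le[OF trivial_limit_at_right_real _ tendsto_const, rotated])
  then show ?thesis
    by simp
qed

lemma norm_product_increment_le:
  fixes u v f g :: "real \<Rightarrow> complex"
  assumes u: "(f has_integral (u t - u s)) {s..t}" and v: "(g has_integral (v t - v s)) {s..t}"
    and h: "((\<lambda>r. f r * v r + u r * g r) has_integral H) {s..t}"
    and n: "((\<lambda>r. norm (f r) + norm (g r)) has_integral N) {s..t}"
    and close: "\<And>r. r \<in> {s..t} \<Longrightarrow> norm (v t - v r) \<le> e \<and> norm (u s - u r) \<le> e"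
  shows "norm (u t * v t - u s * v s - H) \<le> e * N"
proof -
  have "((\<lambda>r. f r * v t + u s * g r) has_integral ((u t - u s) * v t + u s * (v t - v s))) {s..t}"
    by (intro has_integral_add has_integral_mult_left has_integral_mult_right u v)
  from has_integral_diff[OF this h]
  have "((\<lambda>r. f r * (v t - v r) + (u s - u r) * g r) has_integral (u t * v t - u s * v s - H)) {s..t}"
    by (simp add: algebra_simps)
  then have "norm (u t * v t - u s * v s - H) \<le> (e * N) \<bullet> 1"
  proof (rule has_integral_norm_bound_integral_component[OF _ has_integral_mult_right[OF n]])
    fix r assume "r \<in> {s..t}"
    then have "norm (f r * (v t - v r) + (u s - u r) * g r) \<le> norm (f r) * e + e * norm (g r)"
      using close by (intro norm_triangle_le add_mono) (auto simp: norm_mult intro: mult_left_mono mult_right_mono)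
    then show "norm (f r * (v t - v r) + (u s - u r) * g r) \<le> (e * (norm (f r) + norm (g r))) \<bullet> 1"
      by (simp add: algebra_simps)
  qed
  then show ?thesis
    by simp
qed

lemma has_integral_product_of_indefinite_integrals:
  fixes u v f g :: "real \<Rightarrow> complex"
  assumes ab: "a \<le> b"
    and u_cont: "continuous_on {a..b} u" and v_cont: "continuous_on {a..b} v"
    and f_int: "f absolutely_integrable_on {a..b}" and g_int: "g absolutely_integrable_on {a..b}"
    and u: "\<And>s t. a \<le> s \<Longrightarrow> s \<le> t \<Longrightarrow> t \<le> b \<Longrightarrow> (f has_integral (u t - u s)) {s..t}"
    and v: "\<And>s t. a \<le> s \<Longrightarrow> s \<le> t \<Longrightarrow> t \<le> b \<Longrightarrow> (g has_integral (v t - v s)) {s..t}"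
  shows "((\<lambda>r. f r * v r + u r * g r) has_integral (u b * v b - u a * v a)) {a..b}"
proof -
  define h where "h r = f r * v r + u r * g r" for r
  define n where "n r = norm (f r) + norm (g r)" for r
  have "h absolutely_integrable_on {a..b}"
    unfolding h_def using absolutely_integrable_continuous_mult[OF f_int v_cont]
      absolutely_integrable_continuous_mult[OF g_int u_cont]
    by (auto intro: set_integral_add simp: mult.commute)
  then have h_int: "h integrable_on {a..b}"
    by (rule set_lebesgue_integral_eq_integral)
  have n_int: "n integrable_on {a..b}"
    using f_int g_int unfolding n_def[abs_def] absolutely_integrable_on_def by (auto intro: integrable_add)
  have integral_increment: "(k has_integral (integral {a..t} k - integral {a..s} k)) {s..t}"
    if "k integrable_on {a..b}" "a \<le> s" "s \<le> t" "t \<le> b" for k :: "real \<Rightarrow> 'b::banach" and s t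
    using Henstock_Kurzweil_Integration.integral_combine[OF that(2,3) integrable_subinterval_real[OF that(1)]]
      integrable_subinterval_real[OF that(1), of s t] that by (metis add_diff_cancel_left' atLeastatMost_subset_iff has_integral_integral order_refl)
  define P where "P t = u t * v t - integral {a..t} h" for t
  have "P b = P a"
  proof (rule eq_if_increments_dominated[OF ab, where G="\<lambda>t. integral {a..t} n"])
    fix e :: real assume "e > 0"
    then obtain d where d: "d > 0"
      and u_close: "\<And>s r. s \<in> {a..b} \<Longrightarrow> r \<in> {a..b} \<Longrightarrow> dist r s < d \<Longrightarrow> dist (u r) (u s) < e"
      and v_close: "\<And>s r. s \<in> {a..b} \<Longrightarrow> r \<in> {a..b} \<Longrightarrow> dist r s < d \<Longrightarrow> dist (v r) (v s) < e"
      using u_cont v_cont compact_uniformly_continuous[OF _ compact_Icc]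
      unfolding uniformly_continuous_on_def by (metis (no_types) min_less_iff_conj)
    have "norm (P t - P s) \<le> e * (integral {a..t} n - integral {a..s} n)"
      if st: "a \<le> s" "s \<le> t" "t \<le> b" "t - s < d" for s t
    proof -
      have "norm (u t * v t - u s * v s - (integral {a..t} h - integral {a..s} h))
          \<le> e * (integral {a..t} n - integral {a..s} n)"
      proof (rule norm_product_increment_le[OF u v])
        show "((\<lambda>r. f r * v r + u r * g r) has_integral (integral {a..t} h - integral {a..s} h)) {s..t}"
          using integral_increment[OF h_int st(1-3)] by (simp add: h_def[abs_def])
        show "((\<lambda>r. norm (f r) + norm (g r)) has_integral (integral {a..t} n - integral {a..s} n)) {s..t}"
          using integral_increment[OF n_int st(1-3)] by (simp add: n_def[abs_def])
        show "norm (v t - v r) \<le> e \<and> norm (u s - u r) \<le> e" if "r \<in> {s..t}" for r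
          using v_close[of r t] u_close[of r s] that st by (auto simp: dist_norm dist_real_def)
      qed (use st in auto)
      then show ?thesis
        by (simp add: P_def algebra_simps)
    qed
    with d show "\<exists>d>0. \<forall>s t. a \<le> s \<longrightarrow> s \<le> t \<longrightarrow> t \<le> b \<longrightarrow> t - s < d \<longrightarrow>
        norm (P t - P s) \<le> e * (integral {a..t} n - integral {a..s} n)"
      by blast
  qed
  then have "integral {a..b} h = u b * v b - u a * v a"
    by (simp add: P_def algebra_simps)
  then show ?thesis
    using h_int unfolding h_def[abs_def] by (metis has_integral_integral)
qed

lemma absolutely_integrable_on_Icc_if_tails:
  fixes q :: "real \<Rightarrow> complex"
  assumes top: "(\<lambda>x. q x - c) absolutely_integrable_on {0..}"
    and bot: "(\<lambda>x. q x - c') absolutely_integrable_on {..0}"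
  shows "q absolutely_integrable_on {a..b}"
proof -
  have "q absolutely_integrable_on {min a 0..0}"
    using set_integral_add(1)[OF absolutely_integrable_on_subinterval[OF bot]
        absolutely_integrable_continuous_real[OF continuous_on_const[of _ c']]] by auto
  moreover have "q absolutely_integrable_on {0..max b 0}"
    using set_integral_add(1)[OF absolutely_integrable_on_subinterval[OF top]
        absolutely_integrable_continuous_real[OF continuous_on_const[of _ c]]] by auto
  ultimately have "q absolutely_integrable_on {min a 0..0} \<union> {0..max b 0}"
    by (rule absolutely_integrable_Un)
  then show ?thesis
    by (rule absolutely_integrable_on_subinterval) auto
qed

lemma norm_scat_rhs_le:
  fixes q :: "real \<Rightarrow> complex"
  shows "norm (scat_rhs q k t v) \<le> (2 * norm k + norm (q t) + norm (q (- t))) * norm v"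
proof -
  obtain v1 v2 where v: "v = (v1, v2)"
    by fastforce
  have "norm (scat_rhs q k t v) \<le> norm (- \<i> * k * v1 + q t * v2) + norm (q (- t) * v1 + \<i> * k * v2)"
    by (simp add: scat_rhs_def v norm_Pair_le)
  also have "\<dots> \<le> (norm k * norm v1 + norm (q t) * norm v2) + (norm (q (- t)) * norm v1 + norm k * norm v2)"
    by (intro add_mono norm_triangle_le) (simp_all add: norm_mult)
  also have "\<dots> \<le> (norm k * norm v + norm (q t) * norm v) + (norm (q (- t)) * norm v + norm k * norm v)"
    unfolding v by (intro add_mono mult_left_mono norm_fst_le norm_snd_le norm_ge_zero)
  finally show ?thesis
    by (simp add: algebra_simps)
qed

lemma scat_solution_continuous:
  "is_scat_solution q k v \<Longrightarrow> continuous_on UNIV v"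
  unfolding is_scat_solution_def by (blast intro: continuous_on_if_integral_increments)

lemma scat_solution_eq_0:
  fixes q :: "real \<Rightarrow> complex"
  assumes q: "\<And>a b. q absolutely_integrable_on {a..b}"
    and v: "is_scat_solution q k v" and zero: "v x0 = 0"
  shows "v x = 0"
proof -
  have incr: "((\<lambda>t. scat_rhs q k t (v t)) has_integral (v b - v a)) {a..b}" if "a \<le> b" for a b
    using v that by (simp add: is_scat_solution_def)
  have m_int: "(\<lambda>t. 2 * norm k + norm (q t) + norm (q (- t))) integrable_on {a..b}" for a b
    using q[of a b] q[of "- b" "- a"] absolutely_integrable_reflect_real[where f=q and a="- b" and b="- a"]
    by (auto simp: absolutely_integrable_on_def intro!: integrable_add)
  show ?thesis
    by (rule integral_equation_zero[OF incr norm_scat_rhs_le _ m_int zero]) (auto intro!: add_nonneg_nonneg)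
qed

lemma scat_solution_reflect:
  assumes "is_scat_solution q k v"
  shows "is_scat_solution q k (\<lambda>x. (snd (v (- x)), - fst (v (- x))))"
  unfolding is_scat_solution_def
proof (intro allI impI)
  fix a b :: real assume "a \<le> b"
  then have "((\<lambda>t. scat_rhs q k t (v t)) has_integral (v (- a) - v (- b))) {- b..- a}"
    using assms by (simp add: is_scat_solution_def)
  then have "((\<lambda>t. scat_rhs q k (- t) (v (- t))) has_integral (v (- a) - v (- b))) {a..b}"
    using has_integral_reflect_real[where f="\<lambda>t. scat_rhs q k t (v t)" and a="- b" and b="- a"]
    by simp
  moreover have "bounded_linear (\<lambda>w :: complex \<times> complex. (- snd w, fst w))"
    by (intro bounded_linear_Pair bounded_linear_minus bounded_linear_fst bounded_linear_snd)
  ultimately have "((\<lambda>t. (- snd (scat_rhs q k (- t) (v (- t))), fst (scat_rhs q k (- t) (v (- t)))))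
      has_integral (- snd (v (- a) - v (- b)), fst (v (- a) - v (- b)))) {a..b}"
    by (rule has_integral_linear[unfolded o_def])
  then show "((\<lambda>t. scat_rhs q k t (snd (v (- t)), - fst (v (- t)))) has_integral
      (snd (v (- b)), - fst (v (- b))) - (snd (v (- a)), - fst (v (- a)))) {a..b}"
    by (simp add: scat_rhs_def algebra_simps)
qed

lemma scat_solution_diff_scaled:
  assumes "is_scat_solution q k v" "is_scat_solution q k w"
  shows "is_scat_solution q k (\<lambda>x. v x - (c * fst (w x), c * snd (w x)))"
  unfolding is_scat_solution_def
proof (intro allI impI)
  fix a b :: real assume "a \<le> b"
  then have "((\<lambda>t. scat_rhs q k t (v t)) has_integral (v b - v a)) {a..b}"
    and w_incr: "((\<lambda>t. scat_rhs q k t (w t)) has_integral (w b - w a)) {a..b}"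
    using assms by (simp_all add: is_scat_solution_def)
  moreover have "bounded_linear (\<lambda>z :: complex \<times> complex. (c * fst z, c * snd z))"
    by (intro bounded_linear_Pair bounded_linear_compose[OF bounded_linear_mult_right]
        bounded_linear_fst bounded_linear_snd)
  ultimately have diff: "((\<lambda>t. scat_rhs q k t (v t) - (c * fst (scat_rhs q k t (w t)), c * snd (scat_rhs q k t (w t))))
      has_integral (v b - v a) - (c * fst (w b - w a), c * snd (w b - w a))) {a..b}"
    using has_integral_diff has_integral_linear[OF w_incr, unfolded o_def] by blast
  have rhs_diff: "(\<lambda>t. scat_rhs q k t (v t) - (c * fst (scat_rhs q k t (w t)), c * snd (scat_rhs q k t (w t))))
      = (\<lambda>t. scat_rhs q k t (v t - (c * fst (w t), c * snd (w t))))"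
    by (simp add: fun_eq_iff scat_rhs_def algebra_simps)
  have value_diff: "(v b - v a) - (c * fst (w b - w a), c * snd (w b - w a))
      = v b - (c * fst (w b), c * snd (w b)) - (v a - (c * fst (w a), c * snd (w a)))"
    by (simp add: prod_eq_iff algebra_simps)
  show "((\<lambda>t. scat_rhs q k t (v t - (c * fst (w t), c * snd (w t)))) has_integral
      v b - (c * fst (w b), c * snd (w b)) - (v a - (c * fst (w a), c * snd (w a)))) {a..b}"
    using diff unfolding rhs_diff value_diff .
qed

lemma absolutely_integrable_continuous_lincomb:
  fixes p u1 u2 :: "real \<Rightarrow> complex"
  assumes "p absolutely_integrable_on {a..b}" "continuous_on {a..b} u1" "continuous_on {a..b} u2"
  shows "(\<lambda>t. c * u1 t + p t * u2 t) absolutely_integrable_on {a..b}"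
  using set_integral_add(1)[OF absolutely_integrable_continuous_real
      absolutely_integrable_continuous_mult[OF assms(1,3)]] assms(2)
  by (simp add: continuous_intros mult.commute)

lemma scat_solution_components:
  fixes q :: "real \<Rightarrow> complex"
  assumes q: "\<And>a b. q absolutely_integrable_on {a..b}"
    and v: "is_scat_solution q k v" and st: "s \<le> t"
  shows "((\<lambda>r. fst (scat_rhs q k r (v r))) has_integral (fst (v t) - fst (v s))) {s..t}"
    and "((\<lambda>r. snd (scat_rhs q k r (v r))) has_integral (snd (v t) - snd (v s))) {s..t}"
    and "(\<lambda>r. fst (scat_rhs q k r (v r))) absolutely_integrable_on {s..t}"
    and "(\<lambda>r. snd (scat_rhs q k r (v r))) absolutely_integrable_on {s..t}"
proof -
  have incr: "((\<lambda>r. scat_rhs q k r (v r)) has_integral (v t - v s)) {s..t}"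
    using v st by (simp add: is_scat_solution_def)
  show "((\<lambda>r. fst (scat_rhs q k r (v r))) has_integral (fst (v t) - fst (v s))) {s..t}"
    using has_integral_linear[OF incr bounded_linear_fst] by (simp add: o_def)
  show "((\<lambda>r. snd (scat_rhs q k r (v r))) has_integral (snd (v t) - snd (v s))) {s..t}"
    using has_integral_linear[OF incr bounded_linear_snd] by (simp add: o_def)
  have cont: "continuous_on {s..t} (\<lambda>r. fst (v r))" "continuous_on {s..t} (\<lambda>r. snd (v r))"
    using scat_solution_continuous[OF v] by (auto intro!: continuous_intros intro: continuous_on_subset)
  have q_refl: "(\<lambda>r. q (- r)) absolutely_integrable_on {s..t}"
    using q[of "- t" "- s"] absolutely_integrable_reflect_real[where f=q and a="- t" and b="- s"] by simp
  show "(\<lambda>r. fst (scat_rhs q k r (v r))) absolutely_integrable_on {s..t}"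
    using absolutely_integrable_continuous_lincomb[OF q cont, where c="- \<i> * k"]
    by (simp add: scat_rhs_def)
  show "(\<lambda>r. snd (scat_rhs q k r (v r))) absolutely_integrable_on {s..t}"
    using absolutely_integrable_continuous_lincomb[OF q_refl cont(2,1), where c="\<i> * k"]
    by (simp add: scat_rhs_def add.commute)
qed

definition wronskian :: "(real \<Rightarrow> complex \<times> complex) \<Rightarrow> (real \<Rightarrow> complex \<times> complex) \<Rightarrow> real \<Rightarrow> complex" where
  "wronskian v w x = fst (v x) * snd (w x) - snd (v x) * fst (w x)"

lemma wronskian_constant:
  fixes q :: "real \<Rightarrow> complex"
  assumes q: "\<And>a b. q absolutely_integrable_on {a..b}"
    and v: "is_scat_solution q k v" and w: "is_scat_solution q k w"
  shows "wronskian v w x = wronskian v w y"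
proof -
  have "wronskian v w b = wronskian v w a" if ab: "a \<le> b" for a b
  proof -
    define F where "F t = scat_rhs q k t (v t)" for t
    define G where "G t = scat_rhs q k t (w t)" for t
    note V = scat_solution_components[OF q v, folded F_def]
    note W = scat_solution_components[OF q w, folded G_def]
    have cont: "continuous_on {a..b} (\<lambda>t. fst (v t))" "continuous_on {a..b} (\<lambda>t. snd (v t))"
      "continuous_on {a..b} (\<lambda>t. fst (w t))" "continuous_on {a..b} (\<lambda>t. snd (w t))"
      using scat_solution_continuous[OF v] scat_solution_continuous[OF w]
      by (auto intro!: continuous_intros intro: continuous_on_subset)
    have "((\<lambda>r. (fst (F r) * snd (w r) + fst (v r) * snd (G r)) - (snd (F r) * fst (w r) + snd (v r) * fst (G r)))
        has_integral (wronskian v w b - wronskian v w a)) {a..b}"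
      using has_integral_diff[OF
          has_integral_product_of_indefinite_integrals[OF ab cont(1,4) V(3)[OF ab] W(4)[OF ab] V(1) W(2)]
          has_integral_product_of_indefinite_integrals[OF ab cont(2,3) V(4)[OF ab] W(3)[OF ab] V(2) W(1)]]
      by (simp add: wronskian_def algebra_simps)
    moreover have "(fst (F r) * snd (w r) + fst (v r) * snd (G r)) - (snd (F r) * fst (w r) + snd (v r) * fst (G r)) = 0" for r
      by (simp add: F_def G_def scat_rhs_def algebra_simps)
    ultimately show ?thesis
      using has_integral_0_eq by fastforce
  qed
  then show ?thesis
    by (metis linorder_le_cases)
qed

lemma scat_solutions_proportional:
  fixes q :: "real \<Rightarrow> complex"
  assumes q: "\<And>a b. q absolutely_integrable_on {a..b}"
    and v: "is_scat_solution q k v" and w: "is_scat_solution q k w"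
    and W0: "wronskian v w x0 = 0" and v0: "fst (v x0) \<noteq> 0"
  shows "\<exists>c. \<forall>x. w x = (c * fst (v x), c * snd (v x))"
proof -
  define c where "c = fst (w x0) / fst (v x0)"
  have "is_scat_solution q k (\<lambda>x. w x - (c * fst (v x), c * snd (v x)))"
    by (rule scat_solution_diff_scaled[OF w v])
  moreover have "w x0 - (c * fst (v x0), c * snd (v x0)) = 0"
    using W0 v0 by (simp add: c_def wronskian_def prod_eq_iff field_simps)
  ultimately have "w x - (c * fst (v x), c * snd (v x)) = 0" for x
    by (rule scat_solution_eq_0[OF q])
  then show ?thesis
    by auto
qed

lemma exp_decay_at_bot:
  fixes lam :: complex
  assumes "Im lam > 0"
  shows "((\<lambda>x::real. exp (- \<i> * lam * of_real x)) \<longlongrightarrow> 0) at_bot"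
proof -
  have "filterlim (\<lambda>x::real. Im lam * x) at_bot at_bot"
    by (rule filterlim_tendsto_pos_mult_at_bot[OF tendsto_const assms filterlim_ident])
  then have "((\<lambda>x::real. exp (Im lam * x)) \<longlongrightarrow> 0) at_bot"
    using filterlim_compose[OF exp_at_bot] by auto
  moreover have "norm (exp (- \<i> * lam * of_real x)) = exp (Im lam * x)" for x :: real
    by (simp add: norm_exp_eq_Re)
  ultimately show ?thesis
    by (subst tendsto_norm_zero_iff[symmetric]) simp
qed

lemma wronskian_eq_0_if_decaying_at_bot:
  fixes q :: "real \<Rightarrow> complex"
  assumes q: "\<And>a b. q absolutely_integrable_on {a..b}"
    and v: "is_scat_solution q k v" and w: "is_scat_solution q k w"
    and lam: "Im lam > 0"
    and v1: "((\<lambda>x. exp (\<i> * lam * of_real x) * fst (v x)) \<longlongrightarrow> \<alpha>1) at_bot"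
    and v2: "((\<lambda>x. exp (\<i> * lam * of_real x) * snd (v x)) \<longlongrightarrow> \<alpha>2) at_bot"
    and w1: "((\<lambda>x. exp (\<i> * lam * of_real x) * fst (w x)) \<longlongrightarrow> \<beta>1) at_bot"
    and w2: "((\<lambda>x. exp (\<i> * lam * of_real x) * snd (w x)) \<longlongrightarrow> \<beta>2) at_bot"
  shows "wronskian v w x = 0"
proof -
  define e where "e x = exp (\<i> * lam * of_real x)" for x :: real
  define e' where "e' x = exp (- \<i> * lam * of_real x)" for x :: real
  have lim: "((\<lambda>y. ((e y * fst (v y)) * (e y * snd (w y)) - (e y * snd (v y)) * (e y * fst (w y))) * (e' y * e' y))
      \<longlongrightarrow> (\<alpha>1 * \<beta>2 - \<alpha>2 * \<beta>1) * (0 * 0)) at_bot"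
    unfolding e_def e'_def by (intro tendsto_intros v1 v2 w1 w2 exp_decay_at_bot lam)
  have eq: "((e y * fst (v y)) * (e y * snd (w y)) - (e y * snd (v y)) * (e y * fst (w y))) * (e' y * e' y)
      = wronskian v w x" for y
  proof -
    have "e y * e' y = 1"
      by (simp add: e_def e'_def exp_add[symmetric])
    moreover have "((e y * fst (v y)) * (e y * snd (w y)) - (e y * snd (v y)) * (e y * fst (w y))) * (e' y * e' y)
        = wronskian v w y * (e y * e' y) * (e y * e' y)"
      unfolding wronskian_def by algebra
    ultimately show ?thesis
      using wronskian_constant[OF q v w, of y x] by simp
  qed
  have "((\<lambda>y::real. wronskian v w x) \<longlongrightarrow> (\<alpha>1 * \<beta>2 - \<alpha>2 * \<beta>1) * (0 * 0)) at_bot"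
    using lim unfolding eq .
  then show ?thesis
    by (simp add: tendsto_const_iff)
qed

lemma jost_phi_fst_nonzero:
  assumes "jost_phi q qp k lam phi" "lam + k \<noteq> 0"
  shows "\<exists>x. fst (phi x) \<noteq> 0"
proof -
  have "\<forall>\<^sub>F x in at_bot. exp (\<i> * lam * of_real (x::real)) * fst (phi x) \<noteq> 0"
    using assms by (intro tendsto_imp_eventually_ne) (auto simp: jost_phi_def)
  then obtain x where "exp (\<i> * lam * of_real x) * fst (phi x) \<noteq> 0"
    using eventually_happens trivial_limit_at_bot_linorder by blast
  then show ?thesis
    by auto
qed

lemma jost_psi_reflection_eq_jost_phi:
  fixes q :: "real \<Rightarrow> complex"
  assumes q: "\<And>a b. q absolutely_integrable_on {a..b}"
    and lam: "Im lam > 0" and lam_k: "lam + k \<noteq> 0"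
    and phi: "jost_phi q qp k lam phi" and psi: "jost_psi q qp k lam psi"
  shows "(snd (psi (- x)), - fst (psi (- x))) = phi x"
proof -
  define R where "R x = (snd (psi (- x)), - fst (psi (- x)))" for x
  have phi_sol: "is_scat_solution q k phi"
    using phi by (simp add: jost_phi_def)
  have R_sol: "is_scat_solution q k R"
    unfolding R_def[abs_def] using psi by (intro scat_solution_reflect) (simp add: jost_psi_def)
  have psi1: "((\<lambda>x. exp (- \<i> * lam * of_real x) * fst (psi x)) \<longlongrightarrow> - \<i> * qp) at_top"
    and psi2: "((\<lambda>x. exp (- \<i> * lam * of_real x) * snd (psi x)) \<longlongrightarrow> lam + k) at_top"
    using psi by (simp_all add: jost_psi_def)
  have R1: "((\<lambda>x. exp (\<i> * lam * of_real x) * fst (R x)) \<longlongrightarrow> lam + k) at_bot"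
    using filterlim_compose[OF psi2 filterlim_uminus_at_top_at_bot] by (simp add: R_def o_def)
  have R2: "((\<lambda>x. exp (\<i> * lam * of_real x) * snd (R x)) \<longlongrightarrow> \<i> * qp) at_bot"
    using tendsto_minus[OF filterlim_compose[OF psi1 filterlim_uminus_at_top_at_bot]] by (simp add: R_def o_def)
  have phi1: "((\<lambda>x. exp (\<i> * lam * of_real x) * fst (phi x)) \<longlongrightarrow> lam + k) at_bot"
    and phi2: "((\<lambda>x. exp (\<i> * lam * of_real x) * snd (phi x)) \<longlongrightarrow> \<i> * qp) at_bot"
    using phi by (simp_all add: jost_phi_def)
  obtain x0 where x0: "fst (phi x0) \<noteq> 0"
    using jost_phi_fst_nonzero[OF phi lam_k] by blast
  have "wronskian phi R x0 = 0"
    by (rule wronskian_eq_0_if_decaying_at_bot[OF q phi_sol R_sol lam phi1 phi2 R1 R2])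
  then obtain c where c: "\<And>x. R x = (c * fst (phi x), c * snd (phi x))"
    using scat_solutions_proportional[OF q phi_sol R_sol _ x0] by blast
  have "((\<lambda>x. exp (\<i> * lam * of_real x) * fst (R x)) \<longlongrightarrow> c * (lam + k)) at_bot"
    using tendsto_mult_left[OF phi1, of c] by (simp add: c mult.left_commute)
  with R1 have "c * (lam + k) = lam + k"
    using tendsto_unique[OF trivial_limit_at_bot_linorder] by blast
  then have "c = 1"
    using lam_k by simp
  then show ?thesis
    using c[of x] by (simp add: R_def)
qed

theorem mainTheorem7:
  fixes q :: "real \<Rightarrow> complex" and q0 \<theta>p \<theta>m :: real
    and k0 lam b0 :: complex and phi psi :: "real \<Rightarrow> complex \<times> complex"
  assumes q0_pos: "q0 > 0"
    and theta: "\<exists>n::int. \<theta>p + \<theta>m = 2 * pi * of_int n"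
    and lim_top: "(q \<longlongrightarrow> of_real q0 * exp (\<i> * of_real \<theta>p)) at_top"
    and lim_bot: "(q \<longlongrightarrow> of_real q0 * exp (\<i> * of_real \<theta>m)) at_bot"
    and int_top: "(\<lambda>x. q x - of_real q0 * exp (\<i> * of_real \<theta>p)) absolutely_integrable_on {0..}"
    and int_bot: "(\<lambda>x. q x - of_real q0 * exp (\<i> * of_real \<theta>m)) absolutely_integrable_on {..0}"
    and lam_sq: "lam\<^sup>2 = k0\<^sup>2 - (of_real q0)\<^sup>2"
    and lam_im: "Im lam > 0"
    and phi: "jost_phi q (of_real q0 * exp (\<i> * of_real \<theta>p)) k0 lam phi"
    and psi: "jost_psi q (of_real q0 * exp (\<i> * of_real \<theta>p)) k0 lam psi"
    and dep: "\<forall>x. phi x = (b0 * fst (psi x), b0 * snd (psi x))"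
  shows "b0\<^sup>2 = -1"
proof -
  have q: "q absolutely_integrable_on {a..b}" for a b
    by (rule absolutely_integrable_on_Icc_if_tails[OF int_top int_bot])
  have lam_k: "lam + k0 \<noteq> 0"
  proof
    assume "lam + k0 = 0"
    then have "(of_real q0 :: complex)\<^sup>2 = 0"
      using lam_sq by (simp add: eq_neg_iff_add_eq_0[symmetric])
    then show False
      using q0_pos by simp
  qed
  note reflection = jost_psi_reflection_eq_jost_phi[OF q lam_im lam_k phi psi]
  obtain x0 where "fst (phi x0) \<noteq> 0"
    using jost_phi_fst_nonzero[OF phi lam_k] by blast
  then have psi_x0: "fst (psi x0) \<noteq> 0"
    using dep by auto
  have "snd (psi (- x0)) = b0 * fst (psi x0)" "- fst (psi x0) = b0 * snd (psi (- x0))"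
    using reflection[of x0] reflection[of "- x0"] dep by auto
  then have "b0\<^sup>2 * fst (psi x0) = -1 * fst (psi x0)"
    by (simp add: power2_eq_square)
  then show ?thesis
    using psi_x0 by (simp only: mult_cancel_right) simp
qed

end
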